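(* For every base $\mathcal{B}$, atomic multisets $L,K$ and ILL formulae $\varphi,\psi$: if $\Vdash^L_{\mathcal{B}}!\varphi$ and $!\varphi\Vdash^K_{\mathcal{B}}\psi$, then $\Vdash^{L,K}_{\mathcal{B}}\psi$.
   Context: Fix a set $\mathbb{A}$ of propositional atoms. ILL formulae: $\phi ::= p\in\mathbb{A} \mid \top \mid 0 \mid 1 \mid \phi\multimap\phi \mid \phi\otimes\phi \mid \phi\,\&\,\phi \mid \phi\oplus\phi \mid\ !\phi$. All multisets are finite; "$\Gamma,\Delta$" denotes multiset union. Atomic rules and bases: an atomic sequent is $P\Rightarrow p$ with $P$ a multiset of atoms, $p$ an atom. An atomic box is a multiset of atomic sequents. An atomic rule is a triple $\langle\mathbf{A},\mathbf{S},p\rangle$ with $\mathbf{A}$ a multiset of atomic boxes, $\mathbf{S}$ an atomic box, $p$ an atom. A base is a set of atomic rules. An atom $p$ is persistent in $\mathcal{B}$ if some $\langle\varnothing,\mathbf{S},p\rangle\in\mathcal{B}$ has $\mathbf{S}\neq\varnothing$. Derivability $\vdash_{\mathcal{B}}$: (Ref) $p\vdash_{\mathcal{B}}p$; (App) if $\langle\mathbf{A},\mathbf{S},p\rangle\in\mathcal{B}$ with $\mathbf{A}=\{\mathbf{T}_1,\dots,\mathbf{T}_m\}$, and there are atomic multisets $C_1,\dots,C_n$ ($n\ge m$) and a multiset $D=\{d_{m+1},\dots,d_n\}$ of atoms persistent in $\mathcal{B}$ such that $C_i,Q\vdash_{\mathcal{B}}q$ for every $i\le m$ and every $Q\Rightarrow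 q\in\mathbf{T}_i$, $C_j\vdash_{\mathcal{B}}d_j$ for every $m<j\le n$, and $D,U\vdash_{\mathcal{B}}v$ for every $U\Rightarrow v\in\mathbf{S}$, then $C_1,\dots,C_n\vdash_{\mathcal{B}}p$. Support $\Vdash^L_{\mathcal{B}}$ (base $\mathcal{B}$, atomic multiset $L$), by induction on formulae: $\Vdash^L_{\mathcal{B}}p$ iff $L\vdash_{\mathcal{B}}p$; $\Vdash^L_{\mathcal{B}}\varphi\multimap\psi$ iff $\varphi\Vdash^L_{\mathcal{B}}\psi$; $\Vdash^L_{\mathcal{B}}\varphi\otimes\psi$ iff for all $\mathcal{C}\supseteq\mathcal{B}$, atomic $K$, atoms $p$: if $\varphi,\psi\Vdash^K_{\mathcal{C}}p$ then $\Vdash^{L,K}_{\mathcal{C}}p$; $\Vdash^L_{\mathcal{B}}1$ iff for all $\mathcal{C}\supseteq\mathcal{B}$, $K$, $p$: if $\Vdash^K_{\mathcal{C}}p$ then $\Vdash^{L,K}_{\mathcal{C}}p$; $\Vdash^L_{\mathcal{B}}\varphi\&\psi$ iff $\Vdash^L_{\mathcal{B}}\varphi$ and $\Vdash^L_{\mathcal{B}}\psi$; $\Vdash^L_{\mathcal{B}}\varphi\oplus\psi$ iff for all $\mathcal{C}\supseteq\mathcal{B}$, $K$, $p$: if $\varphi\Vdash^K_{\mathcal{C}}p$ and $\psi\Vdash^K_{\mathcal{C}}p$ then $\Vdash^{L,K}_{\mathcal{C}}p$; $\Vdash^L_{\mathcal{B}}0$ iff $\Vdash^{L,K}_{\mathcal{B}}p$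 for all atoms $p$ and atomic $K$; $\Vdash^L_{\mathcal{B}}\top$ always; $\Vdash^L_{\mathcal{B}}!\varphi$ iff for all $\mathcal{C}\supseteq\mathcal{B}$, $K$, $p$: if (for all $\mathcal{D}\supseteq\mathcal{C}$, $\Vdash^{\varnothing}_{\mathcal{D}}\varphi$ implies $\Vdash^K_{\mathcal{D}}p$) then $\Vdash^{L,K}_{\mathcal{C}}p$. For nonempty multisets: $\Vdash^L_{\mathcal{B}}\Gamma,\Delta$ iff $L=K,M$ with $\Vdash^K_{\mathcal{B}}\Gamma$ and $\Vdash^M_{\mathcal{B}}\Delta$. For a nonempty antecedent written $!\Delta,\Theta$, where $!\Delta$ collects the formulae with top-level connective $!$ (with $\Delta$ the formulae under those $!$) and $\Theta$ contains none: $!\Delta,\Theta\Vdash^L_{\mathcal{B}}\varphi$ iff for all $\mathcal{C}\supseteq\mathcal{B}$ and atomic $K$, if $\Vdash^{\varnothing}_{\mathcal{C}}\delta$ for every $\delta\in\Delta$ and $\Vdash^K_{\mathcal{C}}\Theta$ then $\Vdash^{L,K}_{\mathcal{C}}\varphi$ (when $\Theta$ is empty, $K$ is empty). An empty antecedent: $\varnothing\Vdash^L_{\mathcal{B}}\varphi$ means $\Vdash^L_{\mathcal{B}}\varphi$. *)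

theory Defs
  imports "HOL-Library.Multiset"
begin

datatype 'a ill =
    Atom 'a
  | Top
  | Zero
  | One
  | Lolli "'a ill" "'a ill"
  | Tensor "'a ill" "'a ill"
  | With "'a ill" "'a ill"
  | Plus "'a ill" "'a ill"
  | Bang "'a ill"

type_synonym 'a atomic_sequent = "'a multiset \<times> 'a"
type_synonym 'a atomic_box = "'a atomic_sequent multiset"
type_synonym 'a atomic_rule = "'a atomic_box multiset \<times> 'a atomic_box \<times> 'a"
type_synonym 'a base = "'a atomic_rule set"

definition persistent :: "'a base \<Rightarrow> 'a \<Rightarrow> bool" where
  "persistent B p \<longleftrightarrow> (\<exists>S. ({#}, S, p) \<in> B \<and> S \<noteq> {#})"

text \<open>In (App) the boxes of the multiset A are enumerated as the list Ts
  (T_1..T_m), the contexts C_1..C_n as the list Cs (n = length Cs >= m), and the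
  persistent atoms d_(m+1)..d_n as the list ds.\<close>
inductive deriv :: "'a base \<Rightarrow> 'a multiset \<Rightarrow> 'a \<Rightarrow> bool" for B where
  Ref: "deriv B {#p#} p"
| App: "\<lbrakk> (A, S, p) \<in> B; mset Ts = A; length Ts \<le> length Cs;
          length ds = length Cs - length Ts;
          \<forall>d\<in>set ds. persistent B d;
          \<forall>i<length Ts. \<forall>Q q. (Q, q) \<in># Ts ! i \<longrightarrow> deriv B (Cs ! i + Q) q;
          \<forall>j. length Ts \<le> j \<and> j < length Cs \<longrightarrow> deriv B (Cs ! j) (ds ! (j - length Ts));
          \<forall>U v. (U, v) \<in># S \<longrightarrow> deriv B (mset ds + U) v \<rbrakk>
        \<Longrightarrow> deriv B (sum_list Cs) p"

fun is_bang :: "'a ill \<Rightarrow> bool" where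
  "is_bang (Bang _) = True"
| "is_bang _ = False"

fun unbang :: "'a ill \<Rightarrow> 'a ill" where
  "unbang (Bang d) = d"
| "unbang f = f"

lemma size_unbang[simp]: "size (unbang f) \<le> size f"
  by (cases f) auto

text \<open>Antecedents with one or two formulae are
  unfolded following the definition: formulae with top-level ! contribute
  \<Vdash>^\<emptyset> of their body, the others share the context K (split as a multiset union).\<close>
function supp :: "'a base \<Rightarrow> 'a multiset \<Rightarrow> 'a ill \<Rightarrow> bool" where
  "supp B L (Atom p) = deriv B L p"
| "supp B L Top = True"
| "supp B L Zero = (\<forall>p K. deriv B (L + K) p)"
| "supp B L One = (\<forall>C K p. B \<subseteq> C \<longrightarrow> deriv C K p \<longrightarrow> deriv C (L + K) p)"
| "supp B L (Lolli \<phi> \<psi>) =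
     (if is_bang \<phi>
      then (\<forall>C. B \<subseteq> C \<longrightarrow> supp C {#} (unbang \<phi>) \<longrightarrow> supp C L \<psi>)
      else (\<forall>C K. B \<subseteq> C \<longrightarrow> supp C K \<phi> \<longrightarrow> supp C (L + K) \<psi>))"
| "supp B L (Tensor \<phi> \<psi>) =
     (\<forall>C K p. B \<subseteq> C \<longrightarrow>
        (\<forall>D M. C \<subseteq> D \<longrightarrow>
           (is_bang \<phi> \<longrightarrow> supp D {#} (unbang \<phi>)) \<longrightarrow>
           (is_bang \<psi> \<longrightarrow> supp D {#} (unbang \<psi>)) \<longrightarrow>
           (\<exists>M1 M2. M = M1 + M2 \<and>
              (if is_bang \<phi> then M1 = {#} else supp D M1 \<phi>) \<and>
              (if is_bang \<psi> then M2 = {#} else supp D M2 \<psi>)) \<longrightarrow>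
           deriv D (K + M) p)
        \<longrightarrow> deriv C (L + K) p)"
| "supp B L (With \<phi> \<psi>) = (supp B L \<phi> \<and> supp B L \<psi>)"
| "supp B L (Plus \<phi> \<psi>) =
     (\<forall>C K p. B \<subseteq> C \<longrightarrow>
        (\<forall>D M. C \<subseteq> D \<longrightarrow>
           (if is_bang \<phi> then M = {#} \<and> supp D {#} (unbang \<phi>) else supp D M \<phi>) \<longrightarrow>
           deriv D (K + M) p) \<longrightarrow>
        (\<forall>D M. C \<subseteq> D \<longrightarrow>
           (if is_bang \<psi> then M = {#} \<and> supp D {#} (unbang \<psi>) else supp D M \<psi>) \<longrightarrow>
           deriv D (K + M) p) \<longrightarrow>
        deriv C (L + K) p)"
| "supp B L (Bang \<phi>) =
     (\<forall>C K p. B \<subseteq> C \<longrightarrow>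
        (\<forall>D. C \<subseteq> D \<longrightarrow> supp D {#} \<phi> \<longrightarrow> deriv D K p) \<longrightarrow>
        deriv C (L + K) p)"
  by pat_completeness auto
termination
  by (relation "measure (\<lambda>(B, L, f). size f)")
     (auto simp: le_imp_less_Suc less_Suc_eq_le trans_le_add1 trans_le_add2)

definition supp_seq :: "'a base \<Rightarrow> 'a multiset \<Rightarrow> 'a ill \<Rightarrow> 'a ill \<Rightarrow> bool" where
  "supp_seq B K \<chi> \<psi> =
     (if is_bang \<chi>
      then (\<forall>C. B \<subseteq> C \<longrightarrow> supp C {#} (unbang \<chi>) \<longrightarrow> supp C K \<psi>)
      else (\<forall>C M. B \<subseteq> C \<longrightarrow> supp C M \<chi> \<longrightarrow> supp C (K + M) \<psi>))"

end

theory Submission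
  imports Defs
begin

text \<open>Support is monotone under base extension, and \<open>\<Vdash>\<^sup>L\<^sub>B !\<phi>\<close> is
  itself an elimination clause: it yields \<open>L, K' \<turnstile>\<^sub>C p\<close> as soon as \<open>K' \<turnstile>\<^sub>D p\<close> holds in every
  \<open>D \<supseteq> C\<close> supporting \<open>\<phi>\<close>. For atoms and \<open>0\<close> this is the cut directly; for the
  elimination-style clauses of \<open>1, \<otimes>, \<oplus>, !\<close> it is applied inside the clause, instantiating the hypothesis
  \<open>!\<phi> \<Vdash>\<^sup>K \<psi>\<close> at \<open>D\<close> itself; \<open>\<multimap>\<close> and \<open>&\<close> follow from the induction hypothesis.\<close>

lemma persistent_mono: "persistent B p \<Longrightarrow> B \<subseteq> C \<Longrightarrow> persistent C p"
  unfolding persistent_def by blast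

lemma deriv_mono: "deriv B L p \<Longrightarrow> B \<subseteq> C \<Longrightarrow> deriv C L p"
proof (induction rule: deriv.induct)
  case (Ref p)
  show ?case by (rule deriv.Ref)
next
  case (App A S p Ts Cs ds)
  then show ?case by (intro deriv.App[of A S p C Ts Cs ds]) (auto intro: persistent_mono)
qed

lemma supp_mono: "supp B L f \<Longrightarrow> B \<subseteq> C \<Longrightarrow> supp C L f"
proof (induction f arbitrary: L)
  case Lolli
  then show ?case by (auto dest: order_trans)
qed (auto intro: deriv_mono dest: order_trans)

lemma deriv_bang_cut:
  assumes "supp B L (Bang \<phi>)"
    and "\<And>C. B \<subseteq> C \<Longrightarrow> supp C {#} \<phi> \<Longrightarrow> deriv C K p"
  shows "deriv B (L + K) p"
  using assms by auto

lemma deriv_bang_cut_continuation: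
  assumes bang: "supp B L (Bang \<phi>)"
    and cut: "\<forall>C. B \<subseteq> C \<longrightarrow> supp C {#} \<phi> \<longrightarrow>
                (\<forall>D K' p. C \<subseteq> D \<longrightarrow> H D K' p \<longrightarrow> deriv D (K + K') p)"
    and H_mono: "\<forall>C D K' p. C \<subseteq> D \<longrightarrow> H C K' p \<longrightarrow> H D K' p"
  shows "\<forall>C K' p. B \<subseteq> C \<longrightarrow> H C K' p \<longrightarrow> deriv C (L + K + K') p"
proof (intro allI impI)
  fix C K' p
  assume "B \<subseteq> C" and "H C K' p"
  have "deriv C (L + (K + K')) p"
  proof (rule deriv_bang_cut)
    show "supp C L (Bang \<phi>)" using bang \<open>B \<subseteq> C\<close> by (rule supp_mono)
    fix D
    assume "C \<subseteq> D" and "supp D {#} \<phi>"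
    moreover have "H D K' p" using H_mono \<open>C \<subseteq> D\<close> \<open>H C K' p\<close> by blast
    ultimately show "deriv D (K + K') p" using cut \<open>B \<subseteq> C\<close> by (meson order_trans order_refl)
  qed
  then show "deriv C (L + K + K') p" by (simp add: add.assoc)
qed

lemma supp_bang_cut:
  "supp B L (Bang \<phi>) \<Longrightarrow> \<forall>C. B \<subseteq> C \<longrightarrow> supp C {#} \<phi> \<longrightarrow> supp C K \<psi>
   \<Longrightarrow> supp B (L + K) \<psi>"
proof (induction \<psi> arbitrary: B L K)
  case (Atom p)
  then show ?case by (auto intro: deriv_bang_cut)
next
  case Top
  show ?case by simp
next
  case Zero
  then show ?case by (auto simp: add.assoc intro: deriv_bang_cut)
next
  case One
  then show ?case
    unfolding supp.simps by (intro deriv_bang_cut_continuation) (auto intro: deriv_mono)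
next
  case (Lolli \<chi> \<psi>)
  have lolli_ext: "supp D K (Lolli \<chi> \<psi>)" if "B \<subseteq> C" "C \<subseteq> D" "supp D {#} \<phi>" for C D
    using Lolli.prems(2) that by (meson order_trans)
  show ?case
  proof (cases "is_bang \<chi>")
    case True
    show ?thesis
    proof (simp only: supp.simps True if_True, intro allI impI)
      fix C
      assume "B \<subseteq> C" and \<chi>: "supp C {#} (unbang \<chi>)"
      show "supp C (L + K) \<psi>"
      proof (rule Lolli.IH(2))
        show "supp C L (Bang \<phi>)" using Lolli.prems(1) \<open>B \<subseteq> C\<close> by (rule supp_mono)
        show "\<forall>D. C \<subseteq> D \<longrightarrow> supp D {#} \<phi> \<longrightarrow> supp D K \<psi>"
          using lolli_ext[OF \<open>B \<subseteq> C\<close>] True supp_mono[OF \<chi>] by simp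
      qed
    qed
  next
    case False
    show ?thesis
    proof (simp only: supp.simps False if_False, intro allI impI)
      fix C K'
      assume "B \<subseteq> C" and \<chi>: "supp C K' \<chi>"
      have "supp C (L + (K + K')) \<psi>"
      proof (rule Lolli.IH(2))
        show "supp C L (Bang \<phi>)" using Lolli.prems(1) \<open>B \<subseteq> C\<close> by (rule supp_mono)
        show "\<forall>D. C \<subseteq> D \<longrightarrow> supp D {#} \<phi> \<longrightarrow> supp D (K + K') \<psi>"
          using lolli_ext[OF \<open>B \<subseteq> C\<close>] False supp_mono[OF \<chi>] by simp
      qed
      then show "supp C (L + K + K') \<psi>" by (simp add: add.assoc)
    qed
  qed
next
  case (Tensor \<psi>1 \<psi>2)
  then show ?case
    unfolding supp.simps by (intro deriv_bang_cut_continuation) (auto dest: order_trans)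
next
  case (With \<psi>1 \<psi>2)
  then show ?case by auto
next
  case (Plus \<psi>1 \<psi>2)
  then show ?case
    \<comment> \<open>the two continuation premises of the \<open>\<oplus>\<close> clause are merged into one \<open>H\<close>\<close>
    unfolding supp.simps imp_conjL[symmetric]
    by (intro deriv_bang_cut_continuation[unfolded imp_conjL[symmetric]]) (auto dest: order_trans)
next
  case (Bang \<psi>)
  then show ?case
    unfolding supp.simps by (intro deriv_bang_cut_continuation) (auto dest: order_trans)
qed

theorem lemma10:
  fixes B :: "'a base" and L K :: "'a multiset" and \<phi> \<psi> :: "'a ill"
  assumes "supp B L (Bang \<phi>)"
    and "supp_seq B K (Bang \<phi>) \<psi>"
  shows "supp B (L + K) \<psi>"
  using assms by (auto simp: supp_seq_def intro: supp_bang_cut)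

end
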